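(* Let $m,n\in\mathbb{Z}$ with $\gcd(m,n)=1$, $mn(m+n)\neq0$, $c=-\frac{A(m,n)}{B(m,n)}$, and let $\{x_1,x_2,x_3\}$ be the rational $3$-cycle of $f_c(x)=x^2+c$ (its elements written in lowest terms). (a) The numerators of $x_1,x_2,x_3$ are pairwise relatively prime. (b) If a prime $p$ divides the numerator of some $x_i$, then $c$ is $p$-integral and $c^3+2c^2+c+1\equiv 0\pmod p$. (c) At most one of the numerators of $x_1,x_2,x_3$ equals $\pm1$.
   Context: $A(m,n)=m^6+2m^5n+4m^4n^2+8m^3n^3+9m^2n^4+4mn^5+n^6$, $B(m,n)=4m^2n^2(m+n)^2$. Standing fact: $f_c$ has a rational $3$-cycle (orbit of a rational point of minimal period $3$) iff $c=-A(m,n)/B(m,n)$ for coprime $m,n$ with $mn(m+n)\ne0$; it then has exactly one, namely $x_1=\frac{t_1}{2mn(m+n)}$, $x_2=\frac{t_2}{2mn(m+n)}$, $x_3=-\frac{t_3}{2mn(m+n)}$ with $t_1=m^3+2m^2n+mn^2+n^3$, $t_2=m^3-mn^2-n^3$, $t_3=m^3+2m^2n+3mn^2+n^3$, and these fractions are in lowest terms. *)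

theory Defs
  imports Complex_Main "HOL-Computational_Algebra.Primes"
begin

definition polyA :: "int \<Rightarrow> int \<Rightarrow> int" where
  "polyA m n = m^6 + 2*m^5*n + 4*m^4*n^2 + 8*m^3*n^3 + 9*m^2*n^4 + 4*m*n^5 + n^6"

definition polyB :: "int \<Rightarrow> int \<Rightarrow> int" where
  "polyB m n = 4*m^2*n^2*(m+n)^2"

definition cpar :: "int \<Rightarrow> int \<Rightarrow> rat" where
  "cpar m n = - (of_int (polyA m n) / of_int (polyB m n))"

definition fc :: "rat \<Rightarrow> rat \<Rightarrow> rat" where
  "fc c x = x^2 + c"

definition t1 :: "int \<Rightarrow> int \<Rightarrow> int" where "t1 m n = m^3 + 2*m^2*n + m*n^2 + n^3"
definition t2 :: "int \<Rightarrow> int \<Rightarrow> int" where "t2 m n = m^3 - m*n^2 - n^3"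
definition t3 :: "int \<Rightarrow> int \<Rightarrow> int" where "t3 m n = m^3 + 2*m^2*n + 3*m*n^2 + n^3"

text \<open>The (unique) rational 3-cycle x_1, x_2, x_3 of f_c, as given by the standing fact.\<close>
definition cyc :: "int \<Rightarrow> int \<Rightarrow> nat \<Rightarrow> rat" where
  "cyc m n i =
     (if i = 1 then of_int (t1 m n) / of_int (2*m*n*(m+n))
      else if i = 2 then of_int (t2 m n) / of_int (2*m*n*(m+n))
      else - (of_int (t3 m n) / of_int (2*m*n*(m+n))))"

definition num :: "rat \<Rightarrow> int" where "num q = fst (quotient_of q)"
definition den :: "rat \<Rightarrow> int" where "den q = snd (quotient_of q)"

end

theory Submission
  imports Defs
begin

(* Write x_i = s_i / D with D = 2mn(m+n) and c = -A / D^2.  The cycle relations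
   x_(i+1) = x_i^2 + c become s_(i+1) D = s_i^2 - A over the integers.  Since A is prime
   to D, so is every s_i, hence the s_i are the numerators (up to sign), and a prime
   dividing one of them does not divide D, i.e. c is p-integral.  Consecutive numerators
   are coprime because n(s_1+s_2) = mD, m(s_2+s_3) = -(m+n)D and (m+n)(s_3+s_1) = -nD.
   If p divides s_1, then modulo p the cycle runs 0, c, c^2 + c, 0, so
   c (c^3 + 2c^2 + c + 1) = 0 mod p, and c may be cancelled because p does not divide A.
   Finally, two numerators equal to +-1 have the same square, and the relations then force
   s_1 = s_2 = s_3, whereas s_1 - s_2 = 2n(m^2+mn+n^2) is nonzero. *)

lemma coprime_mult_add_left_iff:
  fixes a b k :: "'a :: ring_gcd"
  shows "coprime (k * a + b) a \<longleftrightarrow> coprime b a"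
  by (metis coprime_iff_gcd_eq_1 gcd.commute gcd_add_mult)

lemma quotient_of_of_int_div:
  fixes a b :: int
  assumes "b \<noteq> 0" and "coprime a b"
  shows "quotient_of (of_int a / of_int b) = (sgn b * a, \<bar>b\<bar>)"
  using assms
  by (cases b "0::int" rule: linorder_cases)
    (simp_all add: Fract_of_int_quotient [symmetric] quotient_of_Fract)

lemma num_of_int_div:
  "b \<noteq> 0 \<Longrightarrow> coprime a b \<Longrightarrow> num (of_int a / of_int b) = sgn b * a"
  by (simp add: num_def quotient_of_of_int_div)

lemma den_of_int_div:
  "b \<noteq> 0 \<Longrightarrow> coprime a b \<Longrightarrow> den (of_int a / of_int b) = \<bar>b\<bar>"
  by (simp add: den_def quotient_of_of_int_div)

definition cubic_hom :: "int \<Rightarrow> int \<Rightarrow> int" where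
  "cubic_hom a d = a^3 + 2*a^2*d + a*d^2 + d^3"

lemma cubic_hom_divide:
  assumes "d \<noteq> 0"
  shows "(of_int a / of_int d :: rat)^3 + 2 * (of_int a / of_int d)^2 + of_int a / of_int d + 1
           = of_int (cubic_hom a d) / of_int (d^3)"
  using assms by (simp add: cubic_hom_def field_simps power_numeral_reduce)

lemma coprime_cubic_hom:
  fixes a d :: int
  assumes "coprime a d"
  shows "coprime (cubic_hom a d) d"
proof -
  have "cubic_hom a d = (2*a^2 + a*d + d^2) * d + a^3"
    by (simp add: cubic_hom_def algebra_simps power_numeral_reduce)
  with assms show ?thesis by (simp add: coprime_mult_add_left_iff)
qed

(* x_i = s_i / D is a 3-cycle of x^2 + c for c = -A / D^2. *)
definition int_three_cycle :: "int \<Rightarrow> int \<Rightarrow> int \<Rightarrow> int \<Rightarrow> int \<Rightarrow> bool" where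
  "int_three_cycle D A s1 s2 s3 \<longleftrightarrow>
     s2 * D = s1^2 - A \<and> s3 * D = s2^2 - A \<and> s1 * D = s3^2 - A"

lemma int_three_cycle_rotate:
  "int_three_cycle D A s1 s2 s3 \<Longrightarrow> int_three_cycle D A s2 s3 s1"
  by (auto simp: int_three_cycle_def)

lemma int_three_cycle_coprime_den:
  assumes "int_three_cycle D A s1 s2 s3" and "coprime A D"
  shows "coprime s1 D"
proof (rule coprimeI)
  fix x assume "x dvd s1" and "x dvd D"
  then have "x dvd s1^2 - s2 * D" by (simp add: power2_eq_square)
  then have "x dvd A" using assms(1) by (simp add: int_three_cycle_def)
  then show "is_unit x" using \<open>x dvd D\<close> assms(2) coprime_common_divisor by blast
qed

(* Eliminating s_2, s_3 from the relations gives ((s_1^2 - A)^2 - A D^2)^2 - A D^6 = s_1 D^7,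
   whose left-hand side is -A times the cubic at s_1 = 0. *)
lemma int_three_cycle_identity:
  assumes "int_three_cycle D A s1 s2 s3"
  shows "A * cubic_hom (-A) (D^2)
           = s1 * (s1 * (s1^2 - 2*A) * (s1^2 * (s1^2 - 2*A) + 2*A*(A - D^2)) - D^7)"
proof -
  have "s2 * D = s1^2 - A" "s3 * D = s2^2 - A" "s1 * D = s3^2 - A"
    using assms by (simp_all add: int_three_cycle_def)
  then show ?thesis unfolding cubic_hom_def by algebra
qed

lemma int_three_cycle_prime_dvd:
  assumes cyc: "int_three_cycle D A s1 s2 s3" and "coprime A D" and "coprime s1 s2"
    and "prime p" and "p dvd s1"
  shows "\<not> p dvd D" and "p dvd cubic_hom (-A) (D^2)"
proof -
  show "\<not> p dvd D"
    using int_three_cycle_coprime_den [OF assms(1,2)] assms(4,5)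
    by (meson coprime_common_divisor not_prime_unit)
  have "\<not> p dvd A"
  proof
    assume "p dvd A"
    with \<open>p dvd s1\<close> have "p dvd s1^2 - A" by (simp add: power2_eq_square)
    then have "p dvd s2 * D" using cyc by (simp add: int_three_cycle_def)
    with \<open>\<not> p dvd D\<close> have "p dvd s2" using \<open>prime p\<close> prime_dvd_mult_iff by blast
    then show False
      using assms(3-5) by (meson coprime_common_divisor not_prime_unit)
  qed
  moreover have "p dvd A * cubic_hom (-A) (D^2)"
    unfolding int_three_cycle_identity [OF cyc] using \<open>p dvd s1\<close> by simp
  ultimately show "p dvd cubic_hom (-A) (D^2)" using \<open>prime p\<close> prime_dvd_mult_iff by blast
qed

lemma int_three_cycle_unit_numerators:
  assumes "int_three_cycle D A s1 s2 s3" and "D \<noteq> 0" and "\<bar>s1\<bar> = 1" and "\<bar>s2\<bar> = 1"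
  shows "s1 = s2 \<and> s2 = s3"
proof -
  have sq: "s1^2 = 1" "s2^2 = 1"
    using assms(3,4) by (metis power2_abs power_one)+
  with assms(1) have "s2 * D = s3 * D" by (simp add: int_three_cycle_def)
  with assms(2) have "s2 = s3" by simp
  with assms(1) sq have "s1 * D = s2 * D" by (simp add: int_three_cycle_def)
  with assms(2) \<open>s2 = s3\<close> show ?thesis by simp
qed

lemma coprime_of_sum_relation:
  fixes s s' D u v :: int
  assumes "coprime s D" and "v dvd D" and "u * (s + s') = v * D"
  shows "coprime s s'"
proof -
  have "coprime s v"
    using assms(1,2) by (meson coprime_common_divisor coprimeI dvd_trans)
  with assms(1) have "coprime s (v * D)" by simp
  then have "coprime s (s + s')"
    using assms(3) by (metis coprime_mult_right_iff)
  then show ?thesis by (simp add: coprime_iff_gcd_eq_1)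
qed

definition cycle_den :: "int \<Rightarrow> int \<Rightarrow> int" where
  "cycle_den m n = 2*m*n*(m+n)"

definition cycle_num :: "int \<Rightarrow> int \<Rightarrow> nat \<Rightarrow> int" where
  "cycle_num m n i = (if i = 1 then t1 m n else if i = 2 then t2 m n else - t3 m n)"

lemma cycle_num_simps:
  "cycle_num m n 1 = t1 m n" "cycle_num m n 2 = t2 m n" "cycle_num m n 3 = - t3 m n"
  by (simp_all add: cycle_num_def)

lemma cyc_eq_cycle_num: "cyc m n i = of_int (cycle_num m n i) / of_int (cycle_den m n)"
  by (simp add: cyc_def cycle_num_def cycle_den_def)

lemma cpar_eq_div: "cpar m n = of_int (- polyA m n) / of_int ((cycle_den m n)^2)"
  by (simp add: cpar_def polyB_def cycle_den_def power_mult_distrib)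

lemma cycle_num_int_three_cycle:
  "int_three_cycle (cycle_den m n) (polyA m n) (cycle_num m n 1) (cycle_num m n 2) (cycle_num m n 3)"
  unfolding int_three_cycle_def cycle_num_simps cycle_den_def t1_def t2_def t3_def polyA_def
  by (intro conjI; algebra)

lemma odd_polyA:
  assumes "coprime m n"
  shows "odd (polyA m n)"
proof -
  have "odd m \<or> odd n"
  proof (rule ccontr)
    assume "\<not> (odd m \<or> odd n)"
    then have "is_unit (2::int)" using assms coprime_common_divisor by auto
    then show False by simp
  qed
  then show ?thesis by (auto simp: polyA_def)
qed

lemma coprime_polyA_cycle_den:
  assumes "coprime m n"
  shows "coprime (polyA m n) (cycle_den m n)"
proof -
  have "polyA m n = (m^5 + 2*m^4*n + 4*m^3*n^2 + 8*m^2*n^3 + 9*m*n^4 + 4*n^5) * m + n^6"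
    by (simp add: polyA_def algebra_simps power_numeral_reduce)
  moreover have "coprime (n^6) m" using assms by (simp add: coprime_commute)
  ultimately have cm: "coprime (polyA m n) m" by (metis coprime_mult_add_left_iff)
  have "polyA m n = (2*m^4 + 2*m^3*n + 6*m^2*n^2 + 3*m*n^3 + n^4) * (n*(m+n)) + m^6"
    by (simp add: polyA_def algebra_simps power_numeral_reduce)
  moreover have "coprime m (m+n)"
    using assms by (simp add: coprime_iff_gcd_eq_1)
  with assms have "coprime (m^6) (n*(m+n))" by simp
  ultimately have "coprime (polyA m n) (n*(m+n))" by (metis coprime_mult_add_left_iff)
  moreover have "coprime (polyA m n) 2"
    using odd_polyA [OF assms] by (simp add: coprime_commute)
  ultimately show ?thesis using cm by (simp add: cycle_den_def)
qed

lemma cycle_num_sum_relations: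
  "n * (cycle_num m n 1 + cycle_num m n 2) = m * cycle_den m n"
  "m * (cycle_num m n 2 + cycle_num m n 3) = -(m+n) * cycle_den m n"
  "(m+n) * (cycle_num m n 3 + cycle_num m n 1) = -n * cycle_den m n"
  unfolding cycle_num_simps by (simp_all add: cycle_den_def t1_def t2_def t3_def algebra_simps
      power_numeral_reduce)

lemma cycle_num_1_ne_2:
  assumes "n \<noteq> 0"
  shows "cycle_num m n 1 \<noteq> cycle_num m n 2"
proof -
  have "4 * (cycle_num m n 1 - cycle_num m n 2) = 2*n * ((2*m + n)^2 + 3*n^2)"
    unfolding cycle_num_simps by (simp add: t1_def t2_def algebra_simps power_numeral_reduce)
  moreover have "(2*m + n)^2 + 3*n^2 > 0"
    using assms by (simp add: add_nonneg_pos)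
  ultimately show ?thesis using assms by auto
qed

lemma cycle_num_cases:
  obtains "cycle_num m n i = cycle_num m n 1" | "cycle_num m n i = cycle_num m n 2"
    | "cycle_num m n i = cycle_num m n 3"
  by (cases "i = 1"; cases "i = 2") (auto simp: cycle_num_def)

lemma coprime_cycle_num_cycle_den:
  assumes "coprime m n"
  shows "coprime (cycle_num m n i) (cycle_den m n)"
proof -
  note cyc = cycle_num_int_three_cycle [of m n]
  note cAD = coprime_polyA_cycle_den [OF assms]
  show ?thesis
    using int_three_cycle_coprime_den [OF cyc cAD]
      int_three_cycle_coprime_den [OF int_three_cycle_rotate [OF cyc] cAD]
      int_three_cycle_coprime_den [OF int_three_cycle_rotate [OF int_three_cycle_rotate [OF cyc]] cAD]
    by (cases rule: cycle_num_cases [of m n i]) simp_all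
qed

lemma abs_num_cyc:
  assumes "coprime m n" and "m * n * (m + n) \<noteq> 0"
  shows "\<bar>num (cyc m n i)\<bar> = \<bar>cycle_num m n i\<bar>"
proof -
  have "cycle_den m n \<noteq> 0" using assms(2) by (simp add: cycle_den_def)
  then show ?thesis
    using coprime_cycle_num_cycle_den [OF assms(1)]
    by (simp add: cyc_eq_cycle_num num_of_int_div abs_mult)
qed

lemma cycle_num_adjacent_coprime:
  assumes "coprime m n"
  shows "coprime (cycle_num m n 1) (cycle_num m n 2)"
    and "coprime (cycle_num m n 2) (cycle_num m n 3)"
    and "coprime (cycle_num m n 3) (cycle_num m n 1)"
proof -
  have "m dvd cycle_den m n" "-(m+n) dvd cycle_den m n" "-n dvd cycle_den m n"
    unfolding minus_dvd_iff by (simp_all add: cycle_den_def)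
  then show "coprime (cycle_num m n 1) (cycle_num m n 2)"
    and "coprime (cycle_num m n 2) (cycle_num m n 3)"
    and "coprime (cycle_num m n 3) (cycle_num m n 1)"
    using coprime_of_sum_relation [OF coprime_cycle_num_cycle_den [OF assms] _ cycle_num_sum_relations(1)]
      coprime_of_sum_relation [OF coprime_cycle_num_cycle_den [OF assms] _ cycle_num_sum_relations(2)]
      coprime_of_sum_relation [OF coprime_cycle_num_cycle_den [OF assms] _ cycle_num_sum_relations(3)]
    by blast+
qed

lemma coprime_num_cyc:
  assumes "coprime m n" and "m * n * (m + n) \<noteq> 0"
    and "i \<in> {1,2,3}" and "j \<in> {1,2,3}" and "i \<noteq> j"
  shows "coprime (num (cyc m n i)) (num (cyc m n j))"
proof -
  note adj = cycle_num_adjacent_coprime [OF assms(1)]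
  note adj' = adj [THEN coprime_commute [THEN iffD1]]
  from assms(3-5) have "(i, j) \<in> {(1,2), (2,3), (3,1), (2,1), (3,2), (1,3)}" by auto
  then have "coprime (cycle_num m n i) (cycle_num m n j)" using adj adj' by fastforce
  then have "coprime \<bar>num (cyc m n i)\<bar> \<bar>num (cyc m n j)\<bar>"
    by (simp add: abs_num_cyc [OF assms(1,2)])
  then show ?thesis by simp
qed

lemma prime_dvd_cycle_num:
  assumes "coprime m n" and "prime p" and "p dvd cycle_num m n i"
  shows "\<not> p dvd cycle_den m n \<and> p dvd cubic_hom (- polyA m n) ((cycle_den m n)^2)"
proof -
  note cyc = cycle_num_int_three_cycle [of m n]
  note cAD = coprime_polyA_cycle_den [OF assms(1)]
  note adj = cycle_num_adjacent_coprime [OF assms(1)]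
  show ?thesis
    using int_three_cycle_prime_dvd [OF cyc cAD adj(1) assms(2)]
      int_three_cycle_prime_dvd [OF int_three_cycle_rotate [OF cyc] cAD adj(2) assms(2)]
      int_three_cycle_prime_dvd [OF int_three_cycle_rotate [OF int_three_cycle_rotate [OF cyc]]
        cAD adj(3) assms(2)]
      assms(3)
    by (cases rule: cycle_num_cases [of m n i]) simp_all
qed

lemma cycle_num_abs_one_unique:
  assumes "m * n * (m + n) \<noteq> 0" and "i \<in> {1,2,3}" and "j \<in> {1,2,3}"
    and "\<bar>cycle_num m n i\<bar> = 1" and "\<bar>cycle_num m n j\<bar> = 1"
  shows "i = j"
proof (rule ccontr)
  assume "i \<noteq> j"
  note cyc = cycle_num_int_three_cycle [of m n]
  have D: "cycle_den m n \<noteq> 0" using assms(1) by (simp add: cycle_den_def)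
  let ?s = "cycle_num m n"
  from assms(2-5) \<open>i \<noteq> j\<close>
  consider "\<bar>?s 1\<bar> = 1" "\<bar>?s 2\<bar> = 1" | "\<bar>?s 2\<bar> = 1" "\<bar>?s 3\<bar> = 1"
    | "\<bar>?s 3\<bar> = 1" "\<bar>?s 1\<bar> = 1"
    by fastforce
  then have "?s 1 = ?s 2"
  proof cases
    case 1
    then show ?thesis using int_three_cycle_unit_numerators [OF cyc D] by blast
  next
    case 2
    then show ?thesis
      using int_three_cycle_unit_numerators [OF int_three_cycle_rotate [OF cyc] D] by simp
  next
    case 3
    then show ?thesis
      using int_three_cycle_unit_numerators
        [OF int_three_cycle_rotate [OF int_three_cycle_rotate [OF cyc]] D] by simp
  qed
  with cycle_num_1_ne_2 show False using assms(1) by auto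
qed

lemma den_cpar:
  assumes "coprime m n" and "m * n * (m + n) \<noteq> 0"
  shows "den (cpar m n) = (cycle_den m n)^2"
proof -
  have "cycle_den m n \<noteq> 0" using assms(2) by (simp add: cycle_den_def)
  then show ?thesis
    using coprime_polyA_cycle_den [OF assms(1)]
    unfolding cpar_eq_div by (subst den_of_int_div) simp_all
qed

lemma num_cubic_cpar:
  assumes "coprime m n" and "m * n * (m + n) \<noteq> 0"
  shows "num ((cpar m n)^3 + 2 * (cpar m n)^2 + cpar m n + 1)
           = cubic_hom (- polyA m n) ((cycle_den m n)^2)"
proof -
  have d: "(cycle_den m n)^2 \<noteq> 0" using assms(2) by (simp add: cycle_den_def)
  have "coprime (- polyA m n) ((cycle_den m n)^2)"
    using coprime_polyA_cycle_den [OF assms(1)] by simp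
  then have "coprime (cubic_hom (- polyA m n) ((cycle_den m n)^2)) ((cycle_den m n)^2)"
    by (rule coprime_cubic_hom)
  then have "coprime (cubic_hom (- polyA m n) ((cycle_den m n)^2)) (((cycle_den m n)^2)^3)"
    by simp
  moreover have "((cycle_den m n)^2)^3 \<noteq> 0" using d by simp
  ultimately show ?thesis
    unfolding cpar_eq_div cubic_hom_divide [OF d] by (subst num_of_int_div) (auto simp: sgn_if)
qed

theorem theorem6:
  fixes m n :: int
  assumes "coprime m n" and "m * n * (m + n) \<noteq> 0"
  shows "(\<forall>i\<in>{1,2,3::nat}. \<forall>j\<in>{1,2,3::nat}. i \<noteq> j \<longrightarrow>
            coprime (num (cyc m n i)) (num (cyc m n j)))
       \<and> (\<forall>(p::int) i. prime p \<and> i \<in> {1,2,3::nat} \<and> p dvd num (cyc m n i) \<longrightarrow>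
            \<not> p dvd den (cpar m n) \<and>
            p dvd num ((cpar m n)^3 + 2 * (cpar m n)^2 + cpar m n + 1))
       \<and> card {i\<in>{1,2,3::nat}. \<bar>num (cyc m n i)\<bar> = 1} \<le> 1"
proof (intro conjI)
  show "\<forall>i\<in>{1,2,3::nat}. \<forall>j\<in>{1,2,3::nat}. i \<noteq> j \<longrightarrow>
          coprime (num (cyc m n i)) (num (cyc m n j))"
    using coprime_num_cyc [OF assms] by blast
  show "\<forall>(p::int) i. prime p \<and> i \<in> {1,2,3::nat} \<and> p dvd num (cyc m n i) \<longrightarrow>
          \<not> p dvd den (cpar m n) \<and> p dvd num ((cpar m n)^3 + 2 * (cpar m n)^2 + cpar m n + 1)"
  proof (intro allI impI, elim conjE)
    fix p :: int and i :: nat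
    assume "prime p" and "p dvd num (cyc m n i)"
    then have "p dvd cycle_num m n i"
      using abs_num_cyc [OF assms, of i] by (metis dvd_abs_iff)
    with prime_dvd_cycle_num [OF assms(1) \<open>prime p\<close>]
    show "\<not> p dvd den (cpar m n) \<and> p dvd num ((cpar m n)^3 + 2 * (cpar m n)^2 + cpar m n + 1)"
      using \<open>prime p\<close> by (simp add: den_cpar [OF assms] num_cubic_cpar [OF assms] prime_dvd_power_iff)
  qed
  let ?S = "{i\<in>{1,2,3::nat}. \<bar>num (cyc m n i)\<bar> = 1}"
  have "i = j" if "i \<in> ?S" and "j \<in> ?S" for i j
    using that cycle_num_abs_one_unique [OF assms(2), of i j] by (simp add: abs_num_cyc [OF assms])
  moreover have "finite ?S" by simp
  ultimately show "card ?S \<le> 1"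
    by (simp only: One_nat_def card_le_Suc0_iff_eq) blast
qed

end
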